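(* Let $k\ge 1$, $h=3k+1$, and $W\in\mathcal W^2_{h\times 3}$. Let $\ell$ be the number of maximal vertical pillars in the middle column $W^t[2]$. Then $$e(W^t[1])+e(W^t[3])\le 2\big(-k-1/3+\ell-e(W^t[2])\big).$$
   Context: A 2-dimensional binary word of dimensions $h\times w$ is an $h\times w$ matrix with entries in $\{\square,\blacksquare\}$ (filled cells $\blacksquare$, empty cells $\square$); $|U|_\blacksquare$ is the number of filled cells of $U$. Two cells $(i,j),(i',j')$ are adjacent if $|i-i'|+|j-j'|=1$; the degree of a filled cell is the number of filled cells adjacent to it. $\mathcal W^2_{h\times w}$ is the set of $h\times w$ binary words in which every filled cell has degree at most $2$. $W^t[j]$ denotes column $j$ of $W$, viewed as an $h\times 1$ word. The excess of an $a\times b$ word $U$ is $e(U)=|U|_\blacksquare-2ab/3$; for a column of height $h$, $e=|\text{column}|_\blacksquare-2h/3$. A maximal vertical pillar in a column is a maximal run of consecutive filled cells in that column (not contained in a longer run of consecutive filled cells of that column). *)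

theory Defs
  imports Complex_Main
begin

text \<open>A 2-dimensional binary word of dimensions h x w is modelled as a predicate
  W :: nat => nat => bool, where W i j means that cell (i,j) is filled;
  rows are indexed 1..h and columns 1..w; values outside this range are ignored.\<close>

type_synonym word2 = "nat \<Rightarrow> nat \<Rightarrow> bool"

definition cells :: "nat \<Rightarrow> nat \<Rightarrow> (nat \<times> nat) set" where
  "cells h w = {1..h} \<times> {1..w}"

definition filled :: "nat \<Rightarrow> nat \<Rightarrow> word2 \<Rightarrow> (nat \<times> nat) set" where
  "filled h w W = {(i, j) \<in> cells h w. W i j}"

definition adjacent :: "nat \<times> nat \<Rightarrow> nat \<times> nat \<Rightarrow> bool" where
  "adjacent c d \<longleftrightarrow>
     \<bar>int (fst c) - int (fst d)\<bar> + \<bar>int (snd c) - int (snd d)\<bar> = 1"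

definition degree :: "nat \<Rightarrow> nat \<Rightarrow> word2 \<Rightarrow> nat \<times> nat \<Rightarrow> nat" where
  "degree h w W c = card {d \<in> filled h w W. adjacent c d}"

definition W2 :: "nat \<Rightarrow> nat \<Rightarrow> word2 set" where
  "W2 h w = {W. \<forall>c \<in> filled h w W. degree h w W c \<le> 2}"

text \<open>Column j of W, viewed as an h x 1 word (column index 1).\<close>
definition col :: "word2 \<Rightarrow> nat \<Rightarrow> word2" where
  "col W j = (\<lambda>i _. W i j)"

definition num_filled :: "nat \<Rightarrow> nat \<Rightarrow> word2 \<Rightarrow> nat" where
  "num_filled a b U = card (filled a b U)"

definition excess :: "nat \<Rightarrow> nat \<Rightarrow> word2 \<Rightarrow> real" where
  "excess a b U = real (num_filled a b U) - 2 * real a * real b / 3"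

text \<open>Maximal vertical pillars of an h x 1 word U (column 1): maximal runs
  {s..t} of consecutive filled cells, represented by their endpoints (s,t).\<close>
definition max_pillars :: "nat \<Rightarrow> word2 \<Rightarrow> (nat \<times> nat) set" where
  "max_pillars h U = {(s, t). 1 \<le> s \<and> s \<le> t \<and> t \<le> h \<and>
      (\<forall>i \<in> {s..t}. U i 1) \<and>
      (s = 1 \<or> \<not> U (s - 1) 1) \<and> (t = h \<or> \<not> U (t + 1) 1)}"

end

theory Submission
  imports Defs
begin

text \<open>Let \<open>a, b, c\<close> be the numbers of filled cells in columns 1, 2, 3 and \<open>e\<close> the number of
  vertical edges inside column 2. A filled middle cell has degree at most 2, so in every row
  the side cells plus the vertical edges of column 2 at that row number at most two; summing
  over the rows gives \<open>a + c + 2e \<le> 2h\<close>. A filled middle cell either starts a maximal pillar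
  or is the second cell of a vertical edge, so \<open>b \<le> \<ell> + e\<close>. Hence \<open>a + c + 2b \<le> 2h + 2\<ell>\<close>, which
  is the claim after substituting \<open>h = 3k + 1\<close>.\<close>

definition vertical_pairs :: "nat \<Rightarrow> word2 \<Rightarrow> nat set" where
  "vertical_pairs h U = {i \<in> {1..<h}. U i 1 \<and> U (Suc i) 1}"

lemma finite_filled [simp]: "finite (filled h w W)"
  unfolding filled_def cells_def by (rule finite_subset[of _ "{1..h} \<times> {1..w}"]) auto

lemma num_filled_column: "num_filled h 1 U = card {i \<in> {1..h}. U i 1}"
proof -
  have "filled h 1 U = (\<lambda>i. (i, 1)) ` {i \<in> {1..h}. U i 1}"
    by (auto simp: filled_def cells_def)
  then show ?thesis
    by (simp add: num_filled_def card_image inj_on_def)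
qed

lemma card_pillar_starts_le:
  "card {s \<in> {1..h}. U s 1 \<and> (s = 1 \<or> \<not> U (s - 1) 1)} \<le> card (max_pillars h U)"
    (is "card ?S \<le> _")
proof -
  define run_end where "run_end s = Max {t. s \<le> t \<and> t \<le> h \<and> (\<forall>i \<in> {s..t}. U i 1)}" for s
  have "(s, run_end s) \<in> max_pillars h U" if s: "s \<in> ?S" for s
  proof -
    let ?R = "{t. s \<le> t \<and> t \<le> h \<and> (\<forall>i \<in> {s..t}. U i 1)}"
    have fin: "finite ?R" by (rule finite_subset[of _ "{..h}"]) auto
    have "s \<in> ?R" using s by auto
    then have end_in: "run_end s \<in> ?R" unfolding run_end_def using fin by (intro Max_in) auto
    have end_max: "t \<le> run_end s" if "t \<in> ?R" for t
      unfolding run_end_def using fin that by (rule Max_ge)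
    have "run_end s = h \<or> \<not> U (run_end s + 1) 1"
    proof (rule ccontr)
      assume "\<not> ?thesis"
      then have "run_end s + 1 \<in> ?R" using end_in by (auto simp: le_Suc_eq)
      then show False using end_max by fastforce
    qed
    then show ?thesis using end_in s by (auto simp: max_pillars_def)
  qed
  moreover have "finite (max_pillars h U)"
    by (rule finite_subset[of _ "{1..h} \<times> {1..h}"]) (auto simp: max_pillars_def)
  ultimately show ?thesis
    by (intro card_inj_on_le[of "\<lambda>s. (s, run_end s)"]) (auto simp: inj_on_def)
qed

lemma num_filled_le_pillars_plus_vertical_pairs:
  "num_filled h 1 U \<le> card (max_pillars h U) + card (vertical_pairs h U)"
proof -
  have "{i \<in> {1..h}. U i 1}
      \<subseteq> {s \<in> {1..h}. U s 1 \<and> (s = 1 \<or> \<not> U (s - 1) 1)} \<union> Suc ` vertical_pairs h U"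
    by (force simp: vertical_pairs_def image_iff)
  then have "card {i \<in> {1..h}. U i 1}
      \<le> card ({s \<in> {1..h}. U s 1 \<and> (s = 1 \<or> \<not> U (s - 1) 1)} \<union> Suc ` vertical_pairs h U)"
    by (rule card_mono[rotated]) (simp add: vertical_pairs_def)
  also have "\<dots> \<le> card {s \<in> {1..h}. U s 1 \<and> (s = 1 \<or> \<not> U (s - 1) 1)} + card (Suc ` vertical_pairs h U)"
    by (rule card_Un_le)
  finally show ?thesis
    using card_pillar_starts_le[of h U] card_image[of Suc "vertical_pairs h U"]
    unfolding num_filled_column by simp
qed

lemma row_count_le_two:
  assumes W: "W \<in> W2 h 3" and i: "i \<in> {1..h}"
  shows "of_bool (W i 1) + of_bool (W i 3) + of_bool (i - 1 \<in> vertical_pairs h (col W 2))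
           + of_bool (i \<in> vertical_pairs h (col W 2)) \<le> (2::nat)"
proof (cases "W i 2")
  case False
  then show ?thesis by (simp add: vertical_pairs_def col_def)
next
  case True
  define N :: "(nat \<times> nat) set" where "N = {(i, 1) | _. W i 1} \<union> {(i, 3) | _. W i 3}
    \<union> {(i - 1, 2) | _. i - 1 \<in> vertical_pairs h (col W 2)}
    \<union> {(Suc i, 2) | _. i \<in> vertical_pairs h (col W 2)}"
  have "card N = of_bool (W i 1) + of_bool (W i 3) + of_bool (i - 1 \<in> vertical_pairs h (col W 2))
           + of_bool (i \<in> vertical_pairs h (col W 2))"
    using i unfolding N_def by (auto simp: card_insert_if vertical_pairs_def)
  moreover have "N \<subseteq> {d \<in> filled h 3 W. adjacent (i, 2) d}"
    using i True
    by (auto simp: N_def vertical_pairs_def col_def filled_def cells_def adjacent_def)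
  then have "card N \<le> degree h 3 W (i, 2)"
    unfolding degree_def
    by (rule card_mono[rotated]) simp
  moreover have "degree h 3 W (i, 2) \<le> 2"
    using W i True by (auto simp: W2_def filled_def cells_def)
  ultimately show ?thesis by simp
qed

lemma side_columns_plus_twice_vertical_pairs_le:
  assumes "W \<in> W2 h 3"
  shows "num_filled h 1 (col W 1) + num_filled h 1 (col W 3)
           + 2 * card (vertical_pairs h (col W 2)) \<le> 2 * h"
proof -
  let ?P = "vertical_pairs h (col W 2)"
  have P_sub: "?P \<subseteq> {1..h}" by (auto simp: vertical_pairs_def)
  have "{1..h} \<inter> {i. i - 1 \<in> ?P} = Suc ` ?P"
    by (auto simp: vertical_pairs_def image_iff intro!: exI[of _ "_ - 1"])
  then have lower: "(\<Sum>i\<in>{1..h}. of_bool (i - 1 \<in> ?P)) = card ?P"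
    by (simp add: card_image)
  have upper: "(\<Sum>i\<in>{1..h}. of_bool (i \<in> ?P)) = card ?P"
    using P_sub by (simp add: Int_absorb1 Collect_mem_eq)
  have side: "(\<Sum>i\<in>{1..h}. of_bool (W i j)) = num_filled h 1 (col W j)" for j
    unfolding num_filled_column col_def by (simp add: Int_def)
  have "(\<Sum>i\<in>{1..h}. of_bool (W i 1) + of_bool (W i 3) + of_bool (i - 1 \<in> ?P)
           + of_bool (i \<in> ?P)) \<le> (\<Sum>i\<in>{1..h}. 2::nat)"
    using row_count_le_two[OF assms] by (intro sum_mono) auto
  then show ?thesis
    unfolding sum.distrib lower upper side by simp
qed

theorem mainTheorem11:
  fixes k h :: nat and W :: word2
  assumes "k \<ge> 1" and "h = 3 * k + 1" and "W \<in> W2 h 3"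
  shows "excess h 1 (col W 1) + excess h 1 (col W 3)
           \<le> 2 * (- real k - 1/3 + real (card (max_pillars h (col W 2)))
                   - excess h 1 (col W 2))"
proof -
  have "num_filled h 1 (col W 1) + num_filled h 1 (col W 3) + 2 * num_filled h 1 (col W 2)
          \<le> 2 * h + 2 * card (max_pillars h (col W 2))"
    using side_columns_plus_twice_vertical_pairs_le[OF assms(3)]
      num_filled_le_pillars_plus_vertical_pairs[of h "col W 2"]
    by linarith
  then have "real (num_filled h 1 (col W 1)) + num_filled h 1 (col W 3)
          + 2 * num_filled h 1 (col W 2) \<le> 2 * real h + 2 * card (max_pillars h (col W 2))"
    by linarith
  then show ?thesis
    unfolding excess_def using assms(2) by (simp add: field_simps)
qed

end
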